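(* Let $f:\mathbb{R}^n\to\mathbb{R}$ be $C^2$ smooth and convex, let $h:\mathbb{R}^n\to(-\infty,\infty]$ be proper, closed and convex, let $t>0$ and fix $z\in\mathbb{R}^n$. Define $F_{\mathrm{ALM}}(x;z):=\nabla f(x)+\frac{1}{t}\big(x-tz-\mathrm{prox}_{th}(x-tz)\big)$. Then for any $x\in\mathbb{R}^n$, the mapping $F_{\mathrm{ALM}}(\cdot;z)$ is BD-regular at $x$ if and only if, for every $M\in\partial_B\,\mathrm{prox}_{th}(x-tz)$, $\nabla^2 f(x)$ is positive definite on $\mathrm{Ker}(I-M)$, i.e. $d^\top\nabla^2 f(x)d>0$ for all nonzero $d$ with $(I-M)d=0$.
   Context: $\mathrm{prox}_{th}(y)=\arg\min_{x}\{h(x)+\frac{1}{2t}\|x-y\|^2\}$. For a locally Lipschitz mapping $G$ with differentiability set $D_G$, the B-Jacobian is $\partial_B G(x)=\{\lim_k J(x^k): x^k\in D_G, x^k\to x\}$; $G$ is BD-regular at $x$ if all elements of $\partial_B G(x)$ are nonsingular. *)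

theory Defs
  imports "HOL-Analysis.Analysis"
begin

definition proper_fun :: "('a::real_normed_vector \<Rightarrow> ereal) \<Rightarrow> bool" where
  "proper_fun h \<longleftrightarrow> (\<forall>x. h x \<noteq> -\<infinity>) \<and> (\<exists>x. h x < \<infinity>)"

definition epigraph_e :: "('a::real_normed_vector \<Rightarrow> ereal) \<Rightarrow> ('a \<times> real) set" where
  "epigraph_e h = {(x, r). h x \<le> ereal r}"

definition closed_fun :: "('a::real_normed_vector \<Rightarrow> ereal) \<Rightarrow> bool" where
  "closed_fun h \<longleftrightarrow> closed (epigraph_e h)"

definition convex_fun :: "('a::real_normed_vector \<Rightarrow> ereal) \<Rightarrow> bool" where
  "convex_fun h \<longleftrightarrow> convex (epigraph_e h)"

definition prox :: "real \<Rightarrow> ('a::real_normed_vector \<Rightarrow> ereal) \<Rightarrow> 'a \<Rightarrow> 'a" where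
  "prox t h y = (THE x. \<forall>w. h x + ereal (1 / (2 * t) * (norm (x - y))\<^sup>2)
                              \<le> h w + ereal (1 / (2 * t) * (norm (w - y))\<^sup>2))"

definition jac :: "(real^'n \<Rightarrow> real^'m) \<Rightarrow> real^'n \<Rightarrow> real^'n^'m" where
  "jac G x = matrix (frechet_derivative G (at x))"

definition grad :: "(real^'n \<Rightarrow> real) \<Rightarrow> real^'n \<Rightarrow> real^'n" where
  "grad f x = (\<chi> i. frechet_derivative f (at x) (axis i 1))"

definition hess :: "(real^'n \<Rightarrow> real) \<Rightarrow> real^'n \<Rightarrow> real^'n^'n" where
  "hess f x = jac (grad f) x"

definition C2 :: "(real^'n \<Rightarrow> real) \<Rightarrow> bool" where
  "C2 f \<longleftrightarrow> (\<forall>x. f differentiable (at x)) \<and> (\<forall>x. grad f differentiable (at x))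
            \<and> continuous_on UNIV (hess f)"

definition B_jac :: "(real^'n \<Rightarrow> real^'m) \<Rightarrow> real^'n \<Rightarrow> (real^'n^'m) set" where
  "B_jac G x = {M. \<exists>xs :: nat \<Rightarrow> real^'n.
      (\<forall>k. G differentiable (at (xs k))) \<and> xs \<longlonglongrightarrow> x \<and> (\<lambda>k. jac G (xs k)) \<longlonglongrightarrow> M}"

definition BD_regular :: "(real^'n \<Rightarrow> real^'n) \<Rightarrow> real^'n \<Rightarrow> bool" where
  "BD_regular G x \<longleftrightarrow> (\<forall>M \<in> B_jac G x. invertible M)"

definition F_ALM :: "(real^'n \<Rightarrow> real) \<Rightarrow> (real^'n \<Rightarrow> ereal) \<Rightarrow> real \<Rightarrow> real^'n \<Rightarrow> real^'n \<Rightarrow> real^'n" where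
  "F_ALM f h t z x = grad f x + (1 / t) *\<^sub>R (x - t *\<^sub>R z - prox t h (x - t *\<^sub>R z))"

end

theory Submission
  imports Defs
begin

(* F_ALM(.; z) differs from -(1/t) prox_th(. - tz) by a C^1 map with Jacobian
   hess f + (1/t) I, so its B-Jacobian at x consists of the matrices hess f x + (1/t)(I - M)
   with M in the B-Jacobian of prox_th at x - tz.  The prox is nonexpansive, hence
   |M d| <= |d|, and hess f x is symmetric positive semidefinite by convexity.  For such
   H and M, (H + c(I - M)) d = 0 forces the two nonnegative quantities d.Hd and d.(I - M)d to
   vanish, i.e. Hd = 0 and Md = d; so H + c(I - M) is singular exactly when some nonzero
   d in Ker(I - M) has d.Hd = 0. *)

section \<open>Jacobians and B-Jacobians\<close>

lemma jac_eqI: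
  fixes G :: "real^'n \<Rightarrow> real^'m"
  assumes "(G has_derivative (\<lambda>v. A *v v)) (at y)"
  shows "jac G y = A"
  by (simp add: jac_def frechet_derivative_at[OF assms, symmetric])

lemma has_derivative_jac:
  fixes G :: "real^'n \<Rightarrow> real^'m"
  assumes "G differentiable (at y)"
  shows "(G has_derivative (\<lambda>v. jac G y *v v)) (at y)"
proof -
  have D: "(G has_derivative frechet_derivative G (at y)) (at y)"
    using assms frechet_derivative_works by blast
  then have "linear (frechet_derivative G (at y))"
    by (rule has_derivative_linear)
  with D show ?thesis
    by (simp add: jac_def matrix_works)
qed

lemma B_jac_shift_mem:
  fixes G :: "real^'n \<Rightarrow> real^'m"
  assumes "M \<in> B_jac G (x - a)"
  shows "M \<in> B_jac (\<lambda>y. G (y - a)) x"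
proof -
  obtain xs where xs: "\<And>k. G differentiable (at (xs k))" "xs \<longlonglongrightarrow> x - a"
    "(\<lambda>k. jac G (xs k)) \<longlonglongrightarrow> M"
    using assms unfolding B_jac_def by blast
  have D: "((\<lambda>y. G (y - a)) has_derivative (\<lambda>v. jac G (xs k) *v v)) (at (xs k + a))" for k
  proof -
    have "((\<lambda>y. y - a) has_derivative (\<lambda>v. v)) (at (xs k + a))"
      by (auto intro!: derivative_eq_intros)
    from has_derivative_compose[OF this] show ?thesis
      using has_derivative_jac[OF xs(1)[of k]] by (simp add: o_def)
  qed
  have "(\<lambda>k. xs k + a) \<longlonglongrightarrow> x"
    using tendsto_add[OF xs(2) tendsto_const[of a]] by simp
  with D show ?thesis
    unfolding B_jac_def using xs(3) jac_eqI[OF D]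
    by (auto simp: differentiable_def intro!: exI[of _ "\<lambda>k. xs k + a"])
qed

lemma B_jac_shift:
  fixes G :: "real^'n \<Rightarrow> real^'m"
  shows "B_jac (\<lambda>y. G (y - a)) x = B_jac G (x - a)"
  using B_jac_shift_mem[where G = G and a = a and x = x]
    B_jac_shift_mem[where G = "\<lambda>y. G (y - a)" and a = "- a" and x = "x - a"]
  by auto

lemma B_jac_scaleR_mem:
  fixes G :: "real^'n \<Rightarrow> real^'m"
  assumes "M \<in> B_jac G x"
  shows "c *\<^sub>R M \<in> B_jac (\<lambda>y. c *\<^sub>R G y) x"
proof -
  obtain xs where xs: "\<And>k. G differentiable (at (xs k))" "xs \<longlonglongrightarrow> x"
    "(\<lambda>k. jac G (xs k)) \<longlonglongrightarrow> M"
    using assms unfolding B_jac_def by blast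
  have D: "((\<lambda>y. c *\<^sub>R G y) has_derivative (\<lambda>v. (c *\<^sub>R jac G (xs k)) *v v)) (at (xs k))" for k
    using has_derivative_scaleR_right[OF has_derivative_jac[OF xs(1)], of c]
    by (simp add: scaleR_matrix_vector_assoc)
  then show ?thesis
    unfolding B_jac_def using xs(2) tendsto_scaleR[OF tendsto_const xs(3)]
    by (auto simp: jac_eqI[OF D] differentiable_def intro!: exI[of _ xs])
qed

lemma B_jac_scaleR:
  fixes G :: "real^'n \<Rightarrow> real^'m"
  assumes "c \<noteq> 0"
  shows "B_jac (\<lambda>y. c *\<^sub>R G y) x = (\<lambda>M. c *\<^sub>R M) ` B_jac G x"
proof
  show "(\<lambda>M. c *\<^sub>R M) ` B_jac G x \<subseteq> B_jac (\<lambda>y. c *\<^sub>R G y) x"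
    using B_jac_scaleR_mem by blast
  show "B_jac (\<lambda>y. c *\<^sub>R G y) x \<subseteq> (\<lambda>M. c *\<^sub>R M) ` B_jac G x"
  proof
    fix M assume "M \<in> B_jac (\<lambda>y. c *\<^sub>R G y) x"
    from B_jac_scaleR_mem[OF this, of "1 / c"] assms
    have "(1 / c) *\<^sub>R M \<in> B_jac G x" by simp
    moreover have "M = c *\<^sub>R ((1 / c) *\<^sub>R M)" using assms by simp
    ultimately show "M \<in> (\<lambda>M. c *\<^sub>R M) ` B_jac G x" by blast
  qed
qed

lemma B_jac_add_smooth_mem:
  fixes G \<phi> :: "real^'n \<Rightarrow> real^'m"
  assumes \<phi>: "\<And>y. (\<phi> has_derivative (\<lambda>v. J y *v v)) (at y)" and J: "isCont J x"
    and M: "M \<in> B_jac G x"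
  shows "J x + M \<in> B_jac (\<lambda>y. \<phi> y + G y) x"
proof -
  obtain xs where xs: "\<And>k. G differentiable (at (xs k))" "xs \<longlonglongrightarrow> x"
    "(\<lambda>k. jac G (xs k)) \<longlonglongrightarrow> M"
    using M unfolding B_jac_def by blast
  have D: "((\<lambda>y. \<phi> y + G y) has_derivative (\<lambda>v. (J (xs k) + jac G (xs k)) *v v)) (at (xs k))" for k
    using has_derivative_add[OF \<phi> has_derivative_jac[OF xs(1)]]
    by (simp add: matrix_vector_mult_add_rdistrib)
  moreover have "(\<lambda>k. J (xs k) + jac G (xs k)) \<longlonglongrightarrow> J x + M"
    by (intro tendsto_add isCont_tendsto_compose[OF J xs(2)] xs(3))
  ultimately show ?thesis
    unfolding B_jac_def using xs(2)
    by (auto simp: jac_eqI[OF D] differentiable_def intro!: exI[of _ xs])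
qed

lemma B_jac_add_smooth:
  fixes G \<phi> :: "real^'n \<Rightarrow> real^'m"
  assumes \<phi>: "\<And>y. (\<phi> has_derivative (\<lambda>v. J y *v v)) (at y)" and J: "isCont J x"
  shows "B_jac (\<lambda>y. \<phi> y + G y) x = (\<lambda>M. J x + M) ` B_jac G x"
proof
  show "(\<lambda>M. J x + M) ` B_jac G x \<subseteq> B_jac (\<lambda>y. \<phi> y + G y) x"
    using B_jac_add_smooth_mem[OF \<phi> J] by blast
  show "B_jac (\<lambda>y. \<phi> y + G y) x \<subseteq> (\<lambda>M. J x + M) ` B_jac G x"
  proof
    fix M assume M: "M \<in> B_jac (\<lambda>y. \<phi> y + G y) x"
    have "((\<lambda>y. - \<phi> y) has_derivative (\<lambda>v. (- J y) *v v)) (at y)" for y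
    proof -
      have "(- A) *v v = - (A *v v)" for A :: "real^'n^'m" and v
        by (simp add: vec_eq_iff matrix_vector_mult_def sum_negf)
      then show ?thesis using has_derivative_minus[OF \<phi>] by simp
    qed
    from B_jac_add_smooth_mem[OF this _ M] J
    have "- J x + M \<in> B_jac G x" by simp
    then show "M \<in> (\<lambda>M. J x + M) ` B_jac G x"
      by (auto intro!: image_eqI[of _ _ "- J x + M"])
  qed
qed

lemma bounded_linear_matrix_vector_mult_left:
  "bounded_linear (\<lambda>A::real^'n^'m. A *v v)"
  by (rule linearI[THEN linear_conv_bounded_linear[THEN iffD1]])
    (simp_all add: matrix_vector_mult_add_rdistrib scaleR_matrix_vector_assoc)

lemma lipschitz_on_has_derivative_norm_le:
  fixes G :: "'a::real_normed_vector \<Rightarrow> 'b::real_normed_vector"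
  assumes G: "L-lipschitz_on X G" and X: "open X" "y \<in> X"
    and D: "(G has_derivative D) (at y)"
  shows "norm (D d) \<le> L * norm d"
proof (cases "d = 0")
  case True
  with has_derivative_linear[OF D] show ?thesis by (simp add: linear_0)
next
  case False
  then have nd: "norm d > 0" by simp
  have "norm (D d) \<le> L * norm d + e" if e: "e > 0" for e
  proof -
    obtain r where r: "r > 0" "ball y r \<subseteq> X" using X open_contains_ball by blast
    obtain \<delta> where \<delta>: "\<delta> > 0" "\<And>x. norm (x - y) < \<delta> \<Longrightarrow>
        norm (G x - G y - D (x - y)) \<le> e / norm d * norm (x - y)"
      using D e nd unfolding has_derivative_at_alt by (meson divide_pos_pos)
    define s where "s = min \<delta> r / (2 * norm d)"
    have s: "s > 0" "s * norm d < \<delta>" "s * norm d < r"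
      using \<delta> r nd by (auto simp: s_def)
    then have "y + s *\<^sub>R d \<in> X" using r by (auto simp: dist_norm)
    then have "norm (G (y + s *\<^sub>R d) - G y) \<le> L * (s * norm d)"
      using lipschitz_on_normD[OF G _ X(2)] s by fastforce
    moreover have "norm (G (y + s *\<^sub>R d) - G y - s *\<^sub>R D d) \<le> s * e"
      using \<delta>(2)[of "y + s *\<^sub>R d"] s nd
      by (simp add: linear_scale[OF has_derivative_linear[OF D]] mult.commute)
    ultimately have "norm (s *\<^sub>R D d) \<le> L * (s * norm d) + s * e"
      using norm_triangle_sub[of "s *\<^sub>R D d" "G (y + s *\<^sub>R d) - G y"]
      by (simp add: norm_minus_commute)
    then have "s * norm (D d) \<le> s * (L * norm d + e)"
      using s by (simp add: algebra_simps)
    then show ?thesis using s by simp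
  qed
  then show ?thesis by (rule field_le_epsilon)
qed

lemma B_jac_norm_le:
  fixes G :: "real^'n \<Rightarrow> real^'m"
  assumes G: "L-lipschitz_on UNIV G" and M: "M \<in> B_jac G y"
  shows "norm (M *v d) \<le> L * norm d"
proof -
  obtain xs where xs: "\<And>k. G differentiable (at (xs k))" "(\<lambda>k. jac G (xs k)) \<longlonglongrightarrow> M"
    using M unfolding B_jac_def by blast
  have "(\<lambda>k. jac G (xs k) *v d) \<longlonglongrightarrow> M *v d"
    using bounded_linear.tendsto[OF bounded_linear_matrix_vector_mult_left xs(2)] .
  moreover have "norm (jac G (xs k) *v d) \<le> L * norm d" for k
    using lipschitz_on_has_derivative_norm_le[OF G _ _ has_derivative_jac[OF xs(1)]] by simp
  ultimately show ?thesis
    by (intro Lim_norm_ubound[OF trivial_limit_sequentially]) auto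
qed

section \<open>Gradient and Hessian of a twice continuously differentiable function\<close>

lemma linear_eq_inner_axis:
  fixes D :: "real^'n \<Rightarrow> real"
  assumes "linear D"
  shows "D v = (\<chi> i. D (axis i 1)) \<bullet> v"
proof -
  have "D v = D (\<Sum>i\<in>UNIV. v $ i *\<^sub>R axis i 1)"
    using basis_expansion[of v] by (simp add: scalar_mult_eq_scaleR)
  also have "\<dots> = (\<Sum>i\<in>UNIV. v $ i * D (axis i 1))"
    using assms by (simp add: linear_sum linear_scale)
  also have "\<dots> = (\<chi> i. D (axis i 1)) \<bullet> v"
    by (simp add: inner_vec_def mult.commute)
  finally show ?thesis .
qed

lemma has_derivative_grad:
  assumes "C2 f"
  shows "(f has_derivative (\<lambda>v. grad f y \<bullet> v)) (at y)"
proof -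
  have D: "(f has_derivative frechet_derivative f (at y)) (at y)"
    using assms frechet_derivative_works by (auto simp: C2_def)
  then have "linear (frechet_derivative f (at y))"
    by (rule has_derivative_linear)
  then have "frechet_derivative f (at y) = (\<lambda>v. grad f y \<bullet> v)"
    by (auto simp: grad_def intro!: ext linear_eq_inner_axis)
  with D show ?thesis by simp
qed

lemma has_derivative_hess:
  assumes "C2 f"
  shows "(grad f has_derivative (\<lambda>v. hess f y *v v)) (at y)"
  using assms by (auto simp: C2_def hess_def intro: has_derivative_jac)

lemma isCont_hess:
  assumes "C2 f"
  shows "isCont (hess f) y"
  using assms by (simp add: C2_def continuous_on_eq_continuous_at)

lemma has_real_derivative_along_line:
  fixes \<phi> :: "'a::real_normed_vector \<Rightarrow> real"
  assumes "(\<phi> has_derivative D) (at (a + r *\<^sub>R u))"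
  shows "((\<lambda>r. \<phi> (a + r *\<^sub>R u)) has_real_derivative D u) (at r)"
proof -
  have "((\<lambda>r. a + r *\<^sub>R u) has_derivative (\<lambda>r. r *\<^sub>R u)) (at r)"
    by (auto intro!: derivative_eq_intros)
  from has_derivative_compose[OF this assms]
  have "((\<lambda>r. \<phi> (a + r *\<^sub>R u)) has_derivative (\<lambda>r. D (r *\<^sub>R u))) (at r)"
    by (simp add: o_def)
  moreover have "(\<lambda>r. D (r *\<^sub>R u)) = (\<lambda>r. D u * r)"
    using has_derivative_linear[OF assms] by (auto simp: linear_scale)
  ultimately show ?thesis by (simp add: has_field_derivative_def)
qed

lemma has_real_derivative_line_grad:
  assumes "C2 f"
  shows "((\<lambda>r. f (a + r *\<^sub>R u)) has_real_derivative grad f (a + r *\<^sub>R u) \<bullet> u) (at r)"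
  using has_real_derivative_along_line[OF has_derivative_grad[OF assms]] .

lemma has_real_derivative_line_hess:
  assumes "C2 f"
  shows "((\<lambda>r. grad f (a + r *\<^sub>R u) \<bullet> w) has_real_derivative (hess f (a + r *\<^sub>R u) *v u) \<bullet> w) (at r)"
  using has_real_derivative_along_line[OF has_derivative_inner_left[OF has_derivative_hess[OF assms]]] .

lemma hess_psd:
  assumes C: "C2 f" and cvx: "convex_on UNIV f"
  shows "0 \<le> d \<bullet> (hess f x *v d)"
proof -
  define g where "g s = f (x + s *\<^sub>R d)" for s
  define k where "k s = grad f (x + s *\<^sub>R d) \<bullet> d" for s
  have g': "(g has_real_derivative k s) (at s)" for s
    unfolding g_def k_def by (rule has_real_derivative_line_grad[OF C])
  have "convex_on UNIV g"
  proof (rule convex_onI)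
    fix \<mu> a b :: real
    have "x + ((1 - \<mu>) * a + \<mu> * b) *\<^sub>R d = (1 - \<mu>) *\<^sub>R (x + a *\<^sub>R d) + \<mu> *\<^sub>R (x + b *\<^sub>R d)"
      by (simp add: algebra_simps)
    moreover assume "0 < \<mu>" "\<mu> < 1"
    ultimately show "g ((1 - \<mu>) *\<^sub>R a + \<mu> *\<^sub>R b) \<le> (1 - \<mu>) * g a + \<mu> * g b"
      unfolding g_def by (simp add: convex_onD[OF cvx])
  qed simp
  then have tangent: "k a * (b - a) \<le> g b - g a" for a b
    by (rule convex_on_imp_above_tangent) (auto simp: g')
  have k_mono: "k 0 \<le> k s" if "s > 0" for s
  proof -
    have "k 0 * s \<le> k s * s"
      using tangent[of 0 s] tangent[of s 0] by (simp add: algebra_simps)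
    with that show ?thesis by simp
  qed
  have "(k has_real_derivative (hess f x *v d) \<bullet> d) (at 0)"
    unfolding k_def using has_real_derivative_line_hess[OF C, of x d d 0] by simp
  moreover have "\<not> (\<exists>e>0. \<forall>h>0. h < e \<longrightarrow> k (0 + h) < k 0)"
    using k_mono by (metis add_0 field_lbound_gt_zero not_less zero_less_one)
  ultimately have "\<not> (hess f x *v d) \<bullet> d < 0"
    using DERIV_neg_dec_right by blast
  then show ?thesis by (simp add: inner_commute)
qed

lemma hess_mixed_difference:
  assumes C: "C2 f" and s: "s > 0"
  obtains p where "norm (p - x) \<le> s * (norm u + norm v)"
    and "f (x + s *\<^sub>R u + s *\<^sub>R v) - f (x + s *\<^sub>R u) - f (x + s *\<^sub>R v) + f x
           = s\<^sup>2 * ((hess f p *v v) \<bullet> u)"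
proof -
  define g where "g r = f (x + s *\<^sub>R v + r *\<^sub>R u) - f (x + r *\<^sub>R u)" for r
  define g' where "g' r = grad f (x + s *\<^sub>R v + r *\<^sub>R u) \<bullet> u - grad f (x + r *\<^sub>R u) \<bullet> u" for r
  have "(g has_real_derivative g' r) (at r)" for r
    unfolding g_def g'_def by (intro DERIV_diff has_real_derivative_line_grad[OF C])
  with MVT2[OF s, of g g'] obtain \<xi> where \<xi>: "0 < \<xi>" "\<xi> < s" "g s - g 0 = s * g' \<xi>"
    by auto
  define k where "k r = grad f (x + \<xi> *\<^sub>R u + r *\<^sub>R v) \<bullet> u" for r
  define k' where "k' r = (hess f (x + \<xi> *\<^sub>R u + r *\<^sub>R v) *v v) \<bullet> u" for r
  have "(k has_real_derivative k' r) (at r)" for r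
    unfolding k_def k'_def by (rule has_real_derivative_line_hess[OF C])
  with MVT2[OF s, of k k'] obtain \<eta> where \<eta>: "0 < \<eta>" "\<eta> < s" "k s - k 0 = s * k' \<eta>"
    by auto
  define p where "p = x + \<xi> *\<^sub>R u + \<eta> *\<^sub>R v"
  have "g' \<xi> = k s - k 0"
    unfolding g'_def k_def by (simp add: add_ac)
  then have "f (x + s *\<^sub>R u + s *\<^sub>R v) - f (x + s *\<^sub>R u) - f (x + s *\<^sub>R v) + f x
      = s\<^sup>2 * ((hess f p *v v) \<bullet> u)"
    using \<xi>(3) \<eta>(3) by (simp add: g_def k'_def p_def power2_eq_square add_ac)
  moreover have "norm (p - x) \<le> s * (norm u + norm v)"
  proof -
    have "norm (p - x) \<le> \<xi> * norm u + \<eta> * norm v"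
      using \<xi> \<eta> norm_triangle_ineq[of "\<xi> *\<^sub>R u" "\<eta> *\<^sub>R v"] by (simp add: p_def)
    also have "\<dots> \<le> s * (norm u + norm v)"
      using \<xi> \<eta> by (simp add: distrib_left add_mono mult_right_mono)
    finally show ?thesis .
  qed
  ultimately show ?thesis using that by blast
qed

text \<open>Schwarz's theorem: the mixed second difference of \<open>f\<close> at scale \<open>s = 1/(k+1)\<close> equals
  \<open>s\<^sup>2\<close> times either mixed partial, taken at points converging to \<open>x\<close>.\<close>
lemma hess_symmetric:
  assumes C: "C2 f"
  shows "u \<bullet> (hess f x *v v) = v \<bullet> (hess f x *v u)"
proof -
  define s where "s k = inverse (real (Suc k))" for k
  define \<Delta> where "\<Delta> k = f (x + s k *\<^sub>R u + s k *\<^sub>R v) - f (x + s k *\<^sub>R u) - f (x + s k *\<^sub>R v) + f x" for k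
  have s: "s k > 0" for k by (simp add: s_def)
  have "\<exists>p. norm (p - x) \<le> s k * (norm u + norm v) \<and> \<Delta> k = (s k)\<^sup>2 * ((hess f p *v v) \<bullet> u)" for k
    using hess_mixed_difference[OF C s[of k], where x = x and u = u and v = v] unfolding \<Delta>_def by blast
  then obtain p where p: "\<And>k. norm (p k - x) \<le> s k * (norm u + norm v)"
    "\<And>k. \<Delta> k = (s k)\<^sup>2 * ((hess f (p k) *v v) \<bullet> u)"
    by metis
  have "\<exists>q. norm (q - x) \<le> s k * (norm v + norm u) \<and> \<Delta> k = (s k)\<^sup>2 * ((hess f q *v u) \<bullet> v)" for k
  proof -
    obtain q where q: "norm (q - x) \<le> s k * (norm v + norm u)"
      "f (x + s k *\<^sub>R v + s k *\<^sub>R u) - f (x + s k *\<^sub>R v) - f (x + s k *\<^sub>R u) + f x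
         = (s k)\<^sup>2 * ((hess f q *v u) \<bullet> v)"
      using hess_mixed_difference[OF C s[of k], where x = x and u = v and v = u] by blast
    moreover have "x + s k *\<^sub>R v + s k *\<^sub>R u = x + s k *\<^sub>R u + s k *\<^sub>R v"
      by (simp add: add_ac)
    ultimately have "\<Delta> k = (s k)\<^sup>2 * ((hess f q *v u) \<bullet> v)"
      unfolding \<Delta>_def by simp
    with q(1) show ?thesis by blast
  qed
  then obtain q where q: "\<And>k. norm (q k - x) \<le> s k * (norm v + norm u)"
    "\<And>k. \<Delta> k = (s k)\<^sup>2 * ((hess f (q k) *v u) \<bullet> v)"
    by metis
  have lim: "(\<lambda>k. (hess f (r k) *v a) \<bullet> b) \<longlonglongrightarrow> (hess f x *v a) \<bullet> b"
    if r: "\<And>k. norm (r k - x) \<le> s k * c" for r c a b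
  proof -
    have "(\<lambda>k. s k * c) \<longlonglongrightarrow> 0"
      unfolding s_def by (intro tendsto_mult_left_zero LIMSEQ_inverse_real_of_nat)
    then have "(\<lambda>k. r k - x) \<longlonglongrightarrow> 0"
      by (rule Lim_null_comparison[rotated]) (intro always_eventually allI r)
    then have "(\<lambda>k. hess f (r k)) \<longlonglongrightarrow> hess f x"
      by (intro isCont_tendsto_compose[OF isCont_hess[OF C]]) (simp add: LIM_zero_iff)
    then show ?thesis
      by (intro tendsto_inner tendsto_const bounded_linear.tendsto[OF bounded_linear_matrix_vector_mult_left])
  qed
  have "(s k)\<^sup>2 * ((hess f (p k) *v v) \<bullet> u) = (s k)\<^sup>2 * ((hess f (q k) *v u) \<bullet> v)" for k
    by (simp only: p(2)[symmetric] q(2)[symmetric])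
  then have pq: "(\<lambda>k. (hess f (p k) *v v) \<bullet> u) = (\<lambda>k. (hess f (q k) *v u) \<bullet> v)"
    using s by (metis less_irrefl mult_left_cancel zero_eq_power2)
  have "(hess f x *v v) \<bullet> u = (hess f x *v u) \<bullet> v"
    using LIMSEQ_unique[OF lim[OF p(1), of v u, unfolded pq] lim[OF q(1), of u v]] .
  then show ?thesis by (simp add: inner_commute)
qed

section \<open>Positive semidefinite plus nonexpansive matrices\<close>

lemma linear_plus_quadratic_nonneg_imp_zero:
  fixes a c :: real
  assumes "\<And>r. 0 \<le> r * a + r\<^sup>2 * c"
  shows "a = 0"
proof (rule ccontr)
  assume "a \<noteq> 0"
  define k where "k = \<bar>c\<bar> + 1"
  have k: "k > 0" "c < k" by (auto simp: k_def)
  have "(- a / k) * a + (- a / k)\<^sup>2 * c = a\<^sup>2 / k * (c / k - 1)"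
    using k by (simp add: field_simps power2_eq_square)
  also have "\<dots> < 0"
    using \<open>a \<noteq> 0\<close> k by (intro mult_pos_neg) (auto simp: field_simps)
  finally show False using assms[of "- a / k"] by simp
qed

lemma psd_form_eq_0_imp_kernel:
  fixes H :: "real^'n^'n"
  assumes sym: "\<And>u v. u \<bullet> (H *v v) = v \<bullet> (H *v u)"
    and psd: "\<And>v. 0 \<le> v \<bullet> (H *v v)"
    and d: "d \<bullet> (H *v d) = 0"
  shows "H *v d = 0"
proof -
  define e where "e = H *v d"
  have "0 \<le> r * (2 * (e \<bullet> e)) + r\<^sup>2 * (e \<bullet> (H *v e))" for r
  proof -
    have "0 \<le> (d + r *\<^sub>R e) \<bullet> (H *v (d + r *\<^sub>R e))"
      by (rule psd)
    also have "\<dots> = d \<bullet> (H *v d) + r * (d \<bullet> (H *v e)) + r * (e \<bullet> (H *v d)) + r\<^sup>2 * (e \<bullet> (H *v e))"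
      by (simp add: matrix_vector_right_distrib inner_add_left inner_add_right
          power2_eq_square algebra_simps flip: scaleR_matrix_vector_assoc)
    also have "\<dots> = r * (2 * (e \<bullet> e)) + r\<^sup>2 * (e \<bullet> (H *v e))"
      using d sym[of d e] by (simp add: e_def)
    finally show ?thesis .
  qed
  then have "2 * (e \<bullet> e) = 0"
    by (rule linear_plus_quadratic_nonneg_imp_zero)
  then show ?thesis by (simp add: e_def)
qed

lemma norm_le_inner_eq_imp_eq:
  fixes x y :: "'a::real_inner"
  assumes "norm y \<le> norm x" and "x \<bullet> y = x \<bullet> x"
  shows "y = x"
proof -
  have "(norm (x - y))\<^sup>2 = (norm y)\<^sup>2 - (norm x)\<^sup>2"
    using assms(2) by (simp add: power2_norm_eq_inner inner_diff_left inner_diff_right inner_commute)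
  also have "\<dots> \<le> 0"
    using assms(1) by (simp add: power_mono)
  finally show ?thesis by simp
qed

lemma invertible_iff_kernel_trivial:
  fixes A :: "real^'n^'n"
  shows "invertible A \<longleftrightarrow> (\<forall>d. A *v d = 0 \<longrightarrow> d = 0)"
  by (simp add: invertible_left_inverse matrix_left_invertible_ker)

lemma invertible_psd_plus_nonexpansive_iff:
  fixes H M :: "real^'n^'n"
  assumes c: "c > 0"
    and sym: "\<And>u v. u \<bullet> (H *v v) = v \<bullet> (H *v u)"
    and psd: "\<And>v. 0 \<le> v \<bullet> (H *v v)"
    and nonexp: "\<And>v. norm (M *v v) \<le> norm v"
  shows "invertible (H + c *\<^sub>R (mat 1 - M)) \<longleftrightarrow>
    (\<forall>d. d \<noteq> 0 \<and> (mat 1 - M) *v d = 0 \<longrightarrow> d \<bullet> (H *v d) > 0)"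
proof -
  have kernel: "(H + c *\<^sub>R (mat 1 - M)) *v d = 0 \<longleftrightarrow>
      (mat 1 - M) *v d = 0 \<and> d \<bullet> (H *v d) = 0" for d
  proof
    assume "(H + c *\<^sub>R (mat 1 - M)) *v d = 0"
    then have "H *v d + c *\<^sub>R (d - M *v d) = 0"
      by (simp add: matrix_vector_mult_add_rdistrib matrix_vector_mult_diff_rdistrib
          flip: scaleR_matrix_vector_assoc)
    then have sum0: "d \<bullet> (H *v d) + c * (d \<bullet> d - d \<bullet> (M *v d)) = 0"
      by (metis inner_add_right inner_diff_right inner_scaleR_right inner_zero_right)
    have "d \<bullet> (M *v d) \<le> norm d * norm (M *v d)"
      by (rule norm_cauchy_schwarz)
    also have "\<dots> \<le> norm d * norm d"
      using nonexp[of d] by (simp add: mult_left_mono)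
    also have "\<dots> = d \<bullet> d"
      by (simp add: power2_eq_square flip: power2_norm_eq_inner)
    finally have "0 \<le> c * (d \<bullet> d - d \<bullet> (M *v d))"
      using c by simp
    with sum0 psd[of d] have H0: "d \<bullet> (H *v d) = 0" and "c * (d \<bullet> d - d \<bullet> (M *v d)) = 0"
      by linarith+
    with c have "d \<bullet> (M *v d) = d \<bullet> d"
      by simp
    then have "M *v d = d"
      using nonexp norm_le_inner_eq_imp_eq by blast
    with H0 show "(mat 1 - M) *v d = 0 \<and> d \<bullet> (H *v d) = 0"
      by (simp add: matrix_vector_mult_diff_rdistrib)
  next
    assume "(mat 1 - M) *v d = 0 \<and> d \<bullet> (H *v d) = 0"
    with psd_form_eq_0_imp_kernel[OF sym psd] show "(H + c *\<^sub>R (mat 1 - M)) *v d = 0"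
      by (simp add: matrix_vector_mult_add_rdistrib flip: scaleR_matrix_vector_assoc)
  qed
  show ?thesis
    unfolding invertible_iff_kernel_trivial kernel
    using psd by (metis less_eq_real_def less_irrefl)
qed

section \<open>The proximal mapping\<close>

definition is_prox_point :: "real \<Rightarrow> ('a::real_normed_vector \<Rightarrow> ereal) \<Rightarrow> 'a \<Rightarrow> 'a \<Rightarrow> bool" where
  "is_prox_point t h y p \<longleftrightarrow> (\<forall>w. h p + ereal (1 / (2 * t) * (norm (p - y))\<^sup>2)
                                  \<le> h w + ereal (1 / (2 * t) * (norm (w - y))\<^sup>2))"

lemma prox_eq_The: "prox t h y = (THE p. is_prox_point t h y p)"
  unfolding prox_def is_prox_point_def ..

lemma proper_fun_neq_MInfty: "proper_fun h \<Longrightarrow> h x \<noteq> -\<infinity>"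
  by (simp add: proper_fun_def)

lemma proper_fun_obtain_finite:
  assumes "proper_fun h"
  obtains x r where "h x = ereal r"
proof -
  obtain x where "h x < \<infinity>" using assms by (auto simp: proper_fun_def)
  moreover have "h x \<noteq> -\<infinity>" using assms by (rule proper_fun_neq_MInfty)
  ultimately show ?thesis using that by (cases "h x") auto
qed

lemma affine_minorant:
  fixes h :: "'a::euclidean_space \<Rightarrow> ereal"
  assumes pr: "proper_fun h" and cl: "closed_fun h" and cv: "convex_fun h"
  obtains a b where "\<And>w. ereal (a \<bullet> w + b) \<le> h w"
proof -
  obtain x0 r0 where r0: "h x0 = ereal r0" using proper_fun_obtain_finite[OF pr] .
  have "(x0, r0 - 1) \<notin> epigraph_e h" using r0 by (simp add: epigraph_e_def)
  then obtain c \<beta> where c: "c \<bullet> (x0, r0 - 1) < \<beta>" "\<forall>p\<in>epigraph_e h. \<beta> < c \<bullet> p"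
    using separating_hyperplane_closed_point cl cv unfolding closed_fun_def convex_fun_def by blast
  obtain c1 c2 where c12: "c = (c1, c2)" by (cases c)
  have "(x0, r0) \<in> epigraph_e h" using r0 by (simp add: epigraph_e_def)
  with c c12 have c2: "c2 > 0" by (force simp: algebra_simps)
  have "ereal ((- (1 / c2) *\<^sub>R c1) \<bullet> w + \<beta> / c2) \<le> h w" for w
  proof (cases "h w")
    case (real r)
    then have "(w, r) \<in> epigraph_e h" by (simp add: epigraph_e_def)
    with c c12 have "\<beta> < c1 \<bullet> w + c2 * r" by force
    with c2 have "(\<beta> - c1 \<bullet> w) / c2 \<le> r" by (simp add: field_simps)
    with real c2 show ?thesis by (simp add: field_simps)
  qed (use proper_fun_neq_MInfty[OF pr] in auto)
  then show ?thesis using that by blast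
qed

lemma square_le_affine_imp_le:
  fixes \<rho> A K :: real
  assumes "\<rho> \<ge> 0" "A \<ge> 0" "K \<ge> 0" "\<rho>\<^sup>2 \<le> K + A * \<rho>"
  shows "\<rho> \<le> 1 + K + A"
proof (cases "\<rho> \<le> 1")
  case False
  then have "K \<le> K * \<rho>" using assms mult_left_mono[of 1 \<rho> K] by simp
  then have "\<rho> * \<rho> \<le> (K + A) * \<rho>" using assms by (simp add: power2_eq_square distrib_right)
  then have "\<rho> \<le> K + A" using False by simp
  then show ?thesis by simp
qed (use assms in auto)

lemma bounded_prox_sublevel:
  fixes h :: "'a::euclidean_space \<Rightarrow> ereal"
  assumes pr: "proper_fun h" and cl: "closed_fun h" and cv: "convex_fun h" and t: "t > 0"
  shows "bounded (epigraph_e h \<inter> {(w, r). r + 1 / (2 * t) * (norm (w - y))\<^sup>2 \<le> C})"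
proof -
  obtain a b where ab: "\<And>w. ereal (a \<bullet> w + b) \<le> h w" using affine_minorant[OF pr cl cv] by blast
  define K where "K = \<bar>C - b - a \<bullet> y\<bar>"
  define R where "R = 1 + 2 * t * K + 2 * t * norm a"
  define R2 where "R2 = \<bar>C\<bar> + norm a * (norm y + R) + \<bar>b\<bar>"
  have "w \<in> cball y R \<and> r \<in> cball 0 R2"
    if hw: "h w \<le> ereal r" and le: "r + 1 / (2 * t) * (norm (w - y))\<^sup>2 \<le> C" for w r
  proof -
    define \<rho> where "\<rho> = norm (w - y)"
    have lo: "a \<bullet> w + b \<le> r" using order_trans[OF ab hw] by simp
    have "a \<bullet> w = a \<bullet> y + a \<bullet> (w - y)" by (simp add: inner_diff_right)
    moreover have "- (norm a * \<rho>) \<le> a \<bullet> (w - y)"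
      unfolding \<rho>_def using Cauchy_Schwarz_ineq2[of a "w - y"] by linarith
    ultimately have "\<rho>\<^sup>2 / (2 * t) \<le> K + norm a * \<rho>"
      using lo le unfolding K_def \<rho>_def by (simp add: abs_if split: if_splits)
    then have "\<rho>\<^sup>2 \<le> 2 * t * K + 2 * t * norm a * \<rho>"
      using t by (simp add: field_simps)
    then have \<rho>R: "\<rho> \<le> R"
      unfolding R_def using square_le_affine_imp_le[of \<rho> "2 * t * norm a" "2 * t * K"] t
      by (simp add: \<rho>_def K_def)
    then have "norm w \<le> norm y + R"
      unfolding \<rho>_def using norm_triangle_ineq2[of w y] by linarith
    then have "- (norm a * (norm y + R)) \<le> a \<bullet> w"
      using Cauchy_Schwarz_ineq2[of a w] mult_left_mono[of "norm w" "norm y + R" "norm a"]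
      by (simp add: abs_le_iff)
    moreover have "0 \<le> 1 / (2 * t) * (norm (w - y))\<^sup>2" using t by simp
    moreover have "0 \<le> norm a * (norm y + R)"
      using t by (simp add: R_def K_def)
    ultimately have "\<bar>r\<bar> \<le> R2"
      using lo le unfolding R2_def by linarith
    with \<rho>R show ?thesis by (simp add: \<rho>_def dist_norm norm_minus_commute)
  qed
  then have "epigraph_e h \<inter> {(w, r). r + 1 / (2 * t) * (norm (w - y))\<^sup>2 \<le> C}
      \<subseteq> cball y R \<times> cball 0 R2"
    by (auto simp: epigraph_e_def)
  then show ?thesis
    by (rule bounded_subset[OF bounded_Times[OF bounded_cball bounded_cball]])
qed

lemma is_prox_point_exists:
  fixes h :: "'a::euclidean_space \<Rightarrow> ereal"
  assumes pr: "proper_fun h" and cl: "closed_fun h" and cv: "convex_fun h" and t: "t > 0"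
  shows "\<exists>p. is_prox_point t h y p"
proof -
  define q where "q w = 1 / (2 * t) * (norm (w - y))\<^sup>2" for w
  define g where "g p = snd p + q (fst p)" for p :: "'a \<times> real"
  obtain x0 r0 where r0: "h x0 = ereal r0" using proper_fun_obtain_finite[OF pr] .
  define K where "K = epigraph_e h \<inter> {(w, r). r + q w \<le> g (x0, r0)}"
  have cont: "continuous_on UNIV g"
    unfolding g_def q_def by (intro continuous_intros)
  have "closed {p. g p \<le> g (x0, r0)}"
    using cont by (intro closed_Collect_le) (auto intro: continuous_on_subset)
  then have "closed K"
    using cl unfolding K_def closed_fun_def g_def by (simp add: case_prod_beta' closed_Int)
  moreover have "bounded K"
    unfolding K_def q_def by (rule bounded_prox_sublevel[OF pr cl cv t])
  ultimately have "compact K" by (simp add: compact_eq_bounded_closed)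
  moreover have "(x0, r0) \<in> K" using r0 by (simp add: K_def epigraph_e_def g_def)
  ultimately obtain ps where ps: "ps \<in> K" "\<And>p. p \<in> K \<Longrightarrow> g ps \<le> g p"
    using continuous_attains_inf[of K g] continuous_on_subset[OF cont] by blast
  obtain ws rs where wrs: "ps = (ws, rs)" by (cases ps)
  have "h ws + ereal (q ws) \<le> h w + ereal (q w)" for w
  proof (cases "h w")
    case (real r)
    have "g ps \<le> g (w, r)"
    proof (cases "(w, r) \<in> K")
      case False
      with real have "g (x0, r0) < g (w, r)" by (simp add: K_def epigraph_e_def g_def)
      moreover have "g ps \<le> g (x0, r0)" using ps(1) wrs by (simp add: K_def g_def)
      ultimately show ?thesis by simp
    qed (rule ps(2))
    moreover have "h ws \<le> ereal rs" using ps(1) wrs by (simp add: K_def epigraph_e_def)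
    ultimately show ?thesis
      using real wrs add_right_mono[of "h ws" "ereal rs" "ereal (q ws)"]
      by (simp add: g_def order_trans)
  qed (use proper_fun_neq_MInfty[OF pr] in auto)
  then show ?thesis unfolding is_prox_point_def q_def by blast
qed

lemma is_prox_point_finite:
  assumes pr: "proper_fun h" and p: "is_prox_point t h y p"
  obtains r where "h p = ereal r"
proof -
  obtain x0 r0 where r0: "h x0 = ereal r0" using proper_fun_obtain_finite[OF pr] .
  have "h p + ereal (1 / (2 * t) * (norm (p - y))\<^sup>2) \<le> ereal (r0 + 1 / (2 * t) * (norm (x0 - y))\<^sup>2)"
    using p r0 unfolding is_prox_point_def by (metis plus_ereal.simps(1))
  then have "h p \<noteq> \<infinity>" by auto
  with proper_fun_neq_MInfty[OF pr] show ?thesis using that by (cases "h p") auto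
qed

text \<open>Compare \<open>p\<close> with the points of the segment from \<open>p\<close> to \<open>w\<close> and let them approach \<open>p\<close>.\<close>
lemma is_prox_point_variational_ineq:
  fixes h :: "'a::real_inner \<Rightarrow> ereal"
  assumes cv: "convex_fun h" and t: "t > 0" and p: "is_prox_point t h y p"
    and rp: "h p = ereal rp" and rw: "h w = ereal rw"
  shows "rp + ((y - p) \<bullet> (w - p)) / t \<le> rw"
proof -
  define q where "q v = 1 / (2 * t) * (norm (v - y))\<^sup>2" for v
  define D where "D = (p - y) \<bullet> (w - p)"
  define A where "A = rw - rp + D / t"
  define B where "B = (norm (w - p))\<^sup>2 / (2 * t)"
  have "0 \<le> A + s * B" if s: "0 < s" "s < 1" for s
  proof -
    define ws where "ws = (1 - s) *\<^sub>R p + s *\<^sub>R w"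
    have "(1 - s) *\<^sub>R (p, rp) + s *\<^sub>R (w, rw) \<in> epigraph_e h"
      using cv s rp rw unfolding convex_fun_def by (intro convexD) (auto simp: epigraph_e_def)
    then have hws: "h ws \<le> ereal ((1 - s) * rp + s * rw)"
      by (simp add: epigraph_e_def ws_def)
    have "ereal (rp + q p) = h p + ereal (q p)"
      using rp by simp
    also have "\<dots> \<le> h ws + ereal (q ws)"
      using p unfolding is_prox_point_def q_def by blast
    also have "\<dots> \<le> ereal ((1 - s) * rp + s * rw) + ereal (q ws)"
      using hws by (rule add_right_mono)
    finally have "rp + q p \<le> (1 - s) * rp + s * rw + q ws"
      by simp
    moreover have ws_y: "ws - y = (p - y) + s *\<^sub>R (w - p)"
      by (simp add: ws_def algebra_simps)
    have "(norm (ws - y))\<^sup>2 = (norm (p - y))\<^sup>2 + 2 * s * D + s * s * (norm (w - p))\<^sup>2"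
      unfolding ws_y
      by (simp add: D_def power2_norm_eq_inner inner_add_left inner_add_right inner_commute
          algebra_simps)
    then have "q ws = q p + s * (D / t) + s * (s * B)"
      unfolding q_def B_def using t by (simp add: field_simps power2_eq_square)
    moreover have "s * (A + s * B) = s * (rw - rp) + s * (D / t) + s * (s * B)"
      by (simp add: A_def algebra_simps)
    ultimately have "0 \<le> s * (A + s * B)"
      by (simp add: algebra_simps)
    with s show ?thesis by (simp add: zero_le_mult_iff)
  qed
  then have "eventually (\<lambda>s. 0 \<le> A + s * B) (at_right 0)"
    using eventually_at_right_real[of 0 1] by (rule eventually_mono[rotated]) auto
  moreover have "((\<lambda>s. A + s * B) \<longlongrightarrow> A + 0 * B) (at_right 0)"
    by (intro tendsto_intros)
  ultimately have "0 \<le> A"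
    using tendsto_lowerbound[of "\<lambda>s. A + s * B" "A + 0 * B" "at_right (0::real)" 0] by simp
  moreover have "(y - p) \<bullet> (w - p) = - D"
    by (simp add: D_def inner_diff_left)
  ultimately show ?thesis by (simp add: A_def)
qed

lemma is_prox_point_firmly_nonexpansive:
  fixes h :: "'a::real_inner \<Rightarrow> ereal"
  assumes pr: "proper_fun h" and cv: "convex_fun h" and t: "t > 0"
    and p1: "is_prox_point t h y1 p1" and p2: "is_prox_point t h y2 p2"
  shows "(norm (p1 - p2))\<^sup>2 \<le> (y1 - y2) \<bullet> (p1 - p2)"
proof -
  obtain r1 where r1: "h p1 = ereal r1" using is_prox_point_finite[OF pr p1] .
  obtain r2 where r2: "h p2 = ereal r2" using is_prox_point_finite[OF pr p2] .
  have "r1 + ((y1 - p1) \<bullet> (p2 - p1)) / t \<le> r2"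
    by (rule is_prox_point_variational_ineq[OF cv t p1 r1 r2])
  moreover have "r2 + ((y2 - p2) \<bullet> (p1 - p2)) / t \<le> r1"
    by (rule is_prox_point_variational_ineq[OF cv t p2 r2 r1])
  ultimately have "((y1 - p1) \<bullet> (p2 - p1) + (y2 - p2) \<bullet> (p1 - p2)) / t \<le> 0"
    by (simp add: add_divide_distrib)
  then have "(y1 - p1) \<bullet> (p2 - p1) + (y2 - p2) \<bullet> (p1 - p2) \<le> 0"
    using t by (simp add: divide_le_0_iff)
  moreover have "(y1 - p1) \<bullet> (p2 - p1) + (y2 - p2) \<bullet> (p1 - p2)
      = (norm (p1 - p2))\<^sup>2 - (y1 - y2) \<bullet> (p1 - p2)"
    by (simp add: power2_norm_eq_inner inner_diff_left inner_diff_right inner_commute algebra_simps)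
  ultimately show ?thesis by simp
qed

lemma is_prox_point_prox:
  fixes h :: "'a::euclidean_space \<Rightarrow> ereal"
  assumes pr: "proper_fun h" and cl: "closed_fun h" and cv: "convex_fun h" and t: "t > 0"
  shows "is_prox_point t h y (prox t h y)"
proof -
  have "\<exists>!p. is_prox_point t h y p"
  proof (rule ex_ex1I)
    show "\<exists>p. is_prox_point t h y p" by (rule is_prox_point_exists[OF pr cl cv t])
  next
    fix p1 p2 assume "is_prox_point t h y p1" "is_prox_point t h y p2"
    from is_prox_point_firmly_nonexpansive[OF pr cv t this] show "p1 = p2" by simp
  qed
  then show ?thesis unfolding prox_eq_The by (rule theI')
qed

lemma prox_nonexpansive:
  fixes h :: "'a::euclidean_space \<Rightarrow> ereal"
  assumes pr: "proper_fun h" and cl: "closed_fun h" and cv: "convex_fun h" and t: "t > 0"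
  shows "1-lipschitz_on UNIV (prox t h)"
proof (rule lipschitz_onI)
  fix y1 y2
  define p1 p2 where "p1 = prox t h y1" and "p2 = prox t h y2"
  have "norm (p1 - p2) * norm (p1 - p2) \<le> (y1 - y2) \<bullet> (p1 - p2)"
    using is_prox_point_firmly_nonexpansive[OF pr cv t is_prox_point_prox[OF assms]
        is_prox_point_prox[OF assms]]
    by (simp add: p1_def p2_def power2_eq_square)
  also have "\<dots> \<le> norm (y1 - y2) * norm (p1 - p2)"
    by (rule norm_cauchy_schwarz)
  finally have "norm (p1 - p2) \<le> norm (y1 - y2)"
    by (cases "p1 = p2") auto
  then show "dist (prox t h y1) (prox t h y2) \<le> 1 * dist y1 y2"
    by (simp add: p1_def p2_def dist_norm)
qed simp

section \<open>The ALM residual\<close>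

lemma B_jac_F_ALM:
  assumes C: "C2 f" and t: "t \<noteq> 0"
  shows "B_jac (F_ALM f h t z) x
    = (\<lambda>M. hess f x + (1 / t) *\<^sub>R (mat 1 - M)) ` B_jac (prox t h) (x - t *\<^sub>R z)"
proof -
  define J where "J y = hess f y + (1 / t) *\<^sub>R mat 1" for y
  have F: "F_ALM f h t z
      = (\<lambda>y. (grad f y + (1 / t) *\<^sub>R (y - t *\<^sub>R z)) + (- (1 / t)) *\<^sub>R prox t h (y - t *\<^sub>R z))"
    by (simp add: fun_eq_iff F_ALM_def algebra_simps)
  have D: "((\<lambda>y. grad f y + (1 / t) *\<^sub>R (y - t *\<^sub>R z)) has_derivative (\<lambda>v. J y *v v)) (at y)" for y
    unfolding J_def
    by (auto intro!: derivative_eq_intros has_derivative_hess[OF C]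
        simp: matrix_vector_mult_add_rdistrib simp flip: scaleR_matrix_vector_assoc)
  have Jx: "isCont J x"
    unfolding J_def by (intro continuous_intros isCont_hess[OF C])
  have nz: "- (1 / t) \<noteq> 0" using t by simp
  have "B_jac (F_ALM f h t z) x
      = (\<lambda>M. J x + M) ` (\<lambda>M. (- (1 / t)) *\<^sub>R M) ` B_jac (prox t h) (x - t *\<^sub>R z)"
    unfolding F B_jac_add_smooth[OF D Jx] B_jac_scaleR[OF nz] B_jac_shift ..
  also have "\<dots> = (\<lambda>M. hess f x + (1 / t) *\<^sub>R (mat 1 - M)) ` B_jac (prox t h) (x - t *\<^sub>R z)"
    unfolding image_image J_def by (simp add: algebra_simps)
  finally show ?thesis .
qed

theorem proposition3p3:
  fixes f :: "real^'n \<Rightarrow> real" and h :: "real^'n \<Rightarrow> ereal" and t :: real and z x :: "real^'n"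
  assumes "C2 f" and "convex_on UNIV f"
    and "proper_fun h" and "closed_fun h" and "convex_fun h"
    and "t > 0"
  shows "BD_regular (F_ALM f h t z) x \<longleftrightarrow>
    (\<forall>M \<in> B_jac (prox t h) (x - t *\<^sub>R z).
       \<forall>d. d \<noteq> 0 \<and> (mat 1 - M) *v d = 0 \<longrightarrow> d \<bullet> (hess f x *v d) > 0)"
proof -
  note C = assms(1) and t = assms(6)
  have "t \<noteq> 0" using t by simp
  have nonexpansive: "norm (M *v v) \<le> norm v" if "M \<in> B_jac (prox t h) (x - t *\<^sub>R z)" for M v
    using B_jac_norm_le[OF prox_nonexpansive[OF assms(3-6)] that] by simp
  have "BD_regular (F_ALM f h t z) x \<longleftrightarrow>
      (\<forall>M \<in> B_jac (prox t h) (x - t *\<^sub>R z). invertible (hess f x + (1 / t) *\<^sub>R (mat 1 - M)))"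
    unfolding BD_regular_def B_jac_F_ALM[OF C \<open>t \<noteq> 0\<close>] by simp
  also have "\<dots> \<longleftrightarrow> (\<forall>M \<in> B_jac (prox t h) (x - t *\<^sub>R z).
       \<forall>d. d \<noteq> 0 \<and> (mat 1 - M) *v d = 0 \<longrightarrow> d \<bullet> (hess f x *v d) > 0)"
    using invertible_psd_plus_nonexpansive_iff[OF _ hess_symmetric[OF C] hess_psd[OF assms(1,2)]
        nonexpansive] t
    by (simp cong: ball_cong)
  finally show ?thesis .
qed

end
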